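(* Let $\Gamma\triangleright W$ be a well-formed CCCP configuration, $c$ a channel and $v$ a closed value, and let $\mathit{eureka},\mathit{fail}$ be channels that do not occur free in $W$ and are idle in $\Gamma$; let $\mathit{arb},\mathit{no}$ be closed values with $\delta_{\mathit{arb}}=\delta_{\mathit{no}}=1$. Define $T_{c?v}=c!\langle v\rangle.\mathit{eureka}!\langle\mathit{arb}\rangle.\mathbf 0+\mathit{fail}!\langle\mathit{no}\rangle.\mathbf 0$ and $T^{\checkmark}_{c?v}=\sigma^{\delta_v}.\mathit{eureka}!\langle\mathit{arb}\rangle.\mathbf 0$. Then $\Gamma\triangleright W\overset{c?v}{\Rightarrow}\Gamma'\triangleright W'$ if and only if $\Gamma\triangleright W|T_{c?v}\to_i^*\Gamma'\triangleright W'|T^{\checkmark}_{c?v}$.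
   Context: CCCP syntax. Fix a set of channels (ranged over by $c,d$) and a set of values containing data variables $x,y$ and a special error value $\mathtt{err}$; closed values $v,w$ contain no variables, and each closed value $v$ has a transmission time $\delta_v\in\mathbb{N}$ with $\delta_v\ge 1$. Expressions $e$ are built from values; closed expressions evaluate to closed values via $[\![e]\!]$. Station code (processes) is given by $P,Q ::= c!\langle e\rangle.P \mid \lfloor ?c(x).P\rfloor Q \mid \sigma.P \mid \tau.P \mid P+Q \mid [b]P,Q \mid X \mid \mathbf{0} \mid \mathrm{fix}\,X.P$, where $b$ is either $e_1=e_2$ or $\mathrm{exp}(c)$, $[b]P,Q$ is a conditional (then-branch $P$, else-branch $Q$), $\lfloor ?c(x).P\rfloor Q$ is a receiver on $c$ with timeout branch $Q$ ($x$ bound in $P$), $\sigma.P$ is a one-unit delay and $\sigma^n.P$ denotes $n$ nested delays. System terms are $W ::= P \mid \lfloor ?c(x).P\rfloor \mid W_1|W_2 \mid \nu c{:}(n,v).W$, where $\lfloor ?c(x).P\rfloor$ is an active receiver ($x$ bound in $P$) and $\nu c{:}(n,v).W$ restricts $c$ with local channel state $(n,v)$. In $\mathrm{fix}\,X.P$ every occurrence of $X$ in $P$ is guarded, i.e. lies within a broadcast prefix, a receiver continuation, a timeout branch, a $\sigma$-prefix, or a branch of a conditional. Terms are identified up to $\alpha$-conversion. A channel environment is a map $\Gamma$ from channels to $\mathbb{N}\times$(closed values); write $\Gamma\vdash_t c:n$ and $\Gamma\vdash_v c:w$ when $\Gamma(c)=(n,w)$; $c$ is idle in $\Gamma$ if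 $\Gamma\vdash_t c:0$ and exposed otherwise; $\Gamma[c\mapsto(n,v)]$ is $\Gamma$ updated at $c$; $\Gamma\le\Gamma'$ iff for every $c$, $\Gamma\vdash_t c:n$ and $\Gamma'\vdash_t c:m$ imply $n\le m$. A configuration $\Gamma\triangleright W$ is a channel environment together with a closed system term (no free data or process variables). Intensional semantics. Actions $\lambda$ are $c!v$, $c?v$, $\sigma$, $\tau$. The environment update $\lambda(\Gamma)$ is: $\sigma(\Gamma)(c)=(\max(n-1,0),w)$ whenever $\Gamma(c)=(n,w)$; $c!v(\Gamma)$ agrees with $\Gamma$ except at $c$, where it is $(\delta_v,v)$ if $c$ is idle in $\Gamma$ and $(\max(\delta_v,n),\mathtt{err})$ if $\Gamma\vdash_t c:n>0$; $c?v(\Gamma)=c!v(\Gamma)$; $\tau(\Gamma)=\Gamma$. The predicate $\mathrm{rcv}(W,c)$ on terms is: true for $\lfloor ?d(x).P\rfloor Q$ iff $d=c$; $\mathrm{rcv}(P+Q,c)=\mathrm{rcv}(P,c)\vee\mathrm{rcv}(Q,c)$; $\mathrm{rcv}(\mathrm{fix}\,X.P,c)=\mathrm{rcv}(P,c)$; $\mathrm{rcv}(W_1|W_2,c)=\mathrm{rcv}(W_1,c)\vee\mathrm{rcv}(W_2,c)$; $\mathrm{rcv}(\nu d{:}(n,v).W,c)=\mathrm{rcv}(W,c)$ (with $d\neq c$ by $\alpha$-conversion); false for all other forms (broadcasts, $\tau.P$, $\sigma.P$, conditionals, $X$, $\mathbf 0$, active receivers). Then $\mathrm{rcv}(\Gamma\triangleright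 W,c)$ holds iff $c$ is idle in $\Gamma$ and $\mathrm{rcv}(W,c)$. Transitions $\Gamma\triangleright W\xrightarrow{\lambda}W'$ are the least relation closed under: (Snd) $[\![e]\!]=v$ implies $\Gamma\triangleright c!\langle e\rangle.P\xrightarrow{c!v}\sigma^{\delta_v}.P$; (Rcv) $c$ idle in $\Gamma$ implies $\Gamma\triangleright\lfloor ?c(x).P\rfloor Q\xrightarrow{c?v}\lfloor ?c(x).P\rfloor$; (RcvIgn) $\neg\mathrm{rcv}(\Gamma\triangleright W,c)$ implies $\Gamma\triangleright W\xrightarrow{c?v}W$; (Sync) $\Gamma\triangleright W_1\xrightarrow{c!v}W_1'$ and $\Gamma\triangleright W_2\xrightarrow{c?v}W_2'$ imply $\Gamma\triangleright W_1|W_2\xrightarrow{c!v}W_1'|W_2'$, and symmetrically; (RcvPar) $\Gamma\triangleright W_i\xrightarrow{c?v}W_i'$ for $i=1,2$ imply $\Gamma\triangleright W_1|W_2\xrightarrow{c?v}W_1'|W_2'$; (TimeNil) $\Gamma\triangleright\mathbf 0\xrightarrow{\sigma}\mathbf 0$; (Sleep) $\Gamma\triangleright\sigma.P\xrightarrow{\sigma}P$; (ActRcv) $\Gamma\vdash_t c:n$, $n>1$ imply $\Gamma\triangleright\lfloor ?c(x).P\rfloor\xrightarrow{\sigma}\lfloor ?c(x).P\rfloor$; (EndRcv) $\Gamma\vdash_t c:1$, $\Gamma\vdash_v c:w$ imply $\Gamma\triangleright\lfloor ?c(x).P\rfloor\xrightarrow{\sigma}\{w/x\}P$; (Timeout)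 $c$ idle in $\Gamma$ implies $\Gamma\triangleright\lfloor ?c(x).P\rfloor Q\xrightarrow{\sigma}Q$; (RcvLate) $c$ exposed in $\Gamma$ implies $\Gamma\triangleright\lfloor ?c(x).P\rfloor Q\xrightarrow{\tau}\lfloor ?c(x).\{\mathtt{err}/x\}P\rfloor$; (Tau) $\Gamma\triangleright\tau.P\xrightarrow{\tau}P$; (Then)/(Else) $\Gamma\triangleright[b]P,Q\xrightarrow{\tau}\sigma.P$ if $[\![b]\!]_\Gamma$ is true and $\xrightarrow{\tau}\sigma.Q$ otherwise, where $[\![e_1=e_2]\!]_\Gamma$ is true iff $[\![e_1]\!]=[\![e_2]\!]$ and $[\![\mathrm{exp}(c)]\!]_\Gamma$ is true iff $c$ is exposed in $\Gamma$; (TimePar) $\Gamma\triangleright W_i\xrightarrow{\sigma}W_i'$ for $i=1,2$ imply $\Gamma\triangleright W_1|W_2\xrightarrow{\sigma}W_1'|W_2'$; (TauPar) $\Gamma\triangleright W_1\xrightarrow{\tau}W_1'$ implies $\Gamma\triangleright W_1|W_2\xrightarrow{\tau}W_1'|W_2$, and symmetrically; (Rec) $\Gamma\triangleright\{\mathrm{fix}\,X.P/X\}P\xrightarrow{\lambda}W$ implies $\Gamma\triangleright\mathrm{fix}\,X.P\xrightarrow{\lambda}W$; (Sum) for $\lambda\in\{\tau,c!v\}$, $\Gamma\triangleright P\xrightarrow{\lambda}W$ implies $\Gamma\triangleright P+Q\xrightarrow{\lambda}W$, and symmetrically; (SumTime) $\Gamma\triangleright P\xrightarrow{\sigma}P'$,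 $\Gamma\triangleright Q\xrightarrow{\sigma}Q'$ imply $\Gamma\triangleright P+Q\xrightarrow{\sigma}P'+Q'$; (SumRcv) $\Gamma\triangleright P\xrightarrow{c?v}W$ and $\mathrm{rcv}(\Gamma\triangleright P,c)$ imply $\Gamma\triangleright P+Q\xrightarrow{c?v}W$, and symmetrically; (ResI) $\Gamma[c\mapsto(n,v)]\triangleright W\xrightarrow{c!w}W'$ implies $\Gamma\triangleright\nu c{:}(n,v).W\xrightarrow{\tau}\nu c{:}(c!w(\Gamma[c\mapsto(n,v)]))(c).W'$; (ResV) $\Gamma[c\mapsto(n,v)]\triangleright W\xrightarrow{\lambda}W'$ with $c$ not occurring in $\lambda$ implies $\Gamma\triangleright\nu c{:}(n,v).W\xrightarrow{\lambda}\nu c{:}(\lambda(\Gamma[c\mapsto(n,v)]))(c).W'$. Reductions. $\Gamma\triangleright W\to\Gamma'\triangleright W'$ iff $\Gamma\triangleright W\xrightarrow{\lambda}W'$ for some $\lambda\in\{c!v,\sigma,\tau\}$ and $\Gamma'=\lambda(\Gamma)$; it is instantaneous ($\to_i$) if $\lambda\neq\sigma$ and timed ($\to_\sigma$) if $\lambda=\sigma$. Extensional semantics. Extensional actions $\alpha\in\{c?v,\sigma,\tau,\gamma(c,v),\iota(c)\}$ between configurations are given by: (Input) $\Gamma\triangleright W\xrightarrow{c?v}W'$ implies $\Gamma\triangleright W\overset{c?v}{\rightarrowtail}c?v(\Gamma)\triangleright W'$; (Time) $\Gamma\triangleright W\xrightarrow{\sigma}W'$ implies $\Gamma\triangleright W\overset{\sigma}{\rightarrowtail}\sigma(\Gamma)\triangleright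 W'$; (Shh) $\Gamma\triangleright W\xrightarrow{c!v}W'$ implies $\Gamma\triangleright W\overset{\tau}{\rightarrowtail}c!v(\Gamma)\triangleright W'$; (TauExt) $\Gamma\triangleright W\xrightarrow{\tau}W'$ implies $\Gamma\triangleright W\overset{\tau}{\rightarrowtail}\Gamma\triangleright W'$; (Deliver) $\Gamma(c)=(1,v)$ and $\Gamma\triangleright W\xrightarrow{\sigma}W'$ imply $\Gamma\triangleright W\overset{\gamma(c,v)}{\rightarrowtail}\sigma(\Gamma)\triangleright W'$; (Idle) $c$ idle in $\Gamma$ implies $\Gamma\triangleright W\overset{\iota(c)}{\rightarrowtail}\Gamma\triangleright W$. Weak actions: $\Rightarrow$ is the reflexive-transitive closure of $\overset{\tau}{\rightarrowtail}$; $\overset{\alpha}{\Rightarrow}$ is $\Rightarrow\overset{\alpha}{\rightarrowtail}\Rightarrow$. Well-formedness. The set of well-formed configurations is the least set such that: $\Gamma\triangleright P$ is well-formed for every closed process $P$; $\Gamma\triangleright\lfloor ?c(x).P\rfloor$ is well-formed whenever $c$ is exposed in $\Gamma$; $\Gamma\triangleright W_1|W_2$ is well-formed whenever $\Gamma\triangleright W_1$ and $\Gamma\triangleright W_2$ are; $\Gamma\triangleright\nu c{:}(n,v).W$ is well-formed whenever $\Gamma[c\mapsto(n,v)]\triangleright W$ is. *)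

theory Defs
  imports Main
begin

section \<open>CCCP: syntax (locally nameless / de Bruijn representation)\<close>

text \<open>Semantic parameters: the transmission time of closed values, the error value,
  and the interpretation of the expression operators.  Closed values have type 'v.\<close>

record ('v, 'f) cccp_sig =
  delta :: "'v \<Rightarrow> nat"
  errv  :: "'v"
  interp :: "'f \<Rightarrow> 'v list \<Rightarrow> 'v"

type_synonym chan = nat

text \<open>Channel references: free channel names, or de Bruijn indices bound by restriction.\<close>
datatype chref = CF chan | CB nat

datatype ('v, 'f) expr = EVal 'v | EVar nat | EOp 'f "('v, 'f) expr list"

datatype ('v, 'f) bexp = BEq "('v, 'f) expr" "('v, 'f) expr" | BExp chref

text \<open>Station code.  Data variables bound by receivers and process variables bound by fix
  are de Bruijn indices, so terms are identified up to alpha-conversion.\<close>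
datatype ('v, 'f) proc =
    PSnd chref "('v, 'f) expr" "('v, 'f) proc"
  | PRcv chref "('v, 'f) proc" "('v, 'f) proc"           (* |_?c(x).P_| Q, x bound in P *)
  | PSleep "('v, 'f) proc"
  | PTau "('v, 'f) proc"
  | PSum "('v, 'f) proc" "('v, 'f) proc"
  | PCond "('v, 'f) bexp" "('v, 'f) proc" "('v, 'f) proc"
  | PVar nat
  | PNil
  | PFix "('v, 'f) proc"

datatype ('v, 'f) sys =
    SProc "('v, 'f) proc"
  | SAct chref "('v, 'f) proc"            (* active receiver |_?c(x).P_| , x bound *)
  | SPar "('v, 'f) sys" "('v, 'f) sys"
  | SNu nat 'v "('v, 'f) sys"             (* nu c:(n,v).W, c bound *)

fun sigmas :: "nat \<Rightarrow> ('v, 'f) proc \<Rightarrow> ('v, 'f) proc" where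
  "sigmas 0 P = P"
| "sigmas (Suc n) P = PSleep (sigmas n P)"

fun closedE :: "nat \<Rightarrow> ('v, 'f) expr \<Rightarrow> bool" where
  "closedE d (EVal v) = True"
| "closedE d (EVar n) = (n < d)"
| "closedE d (EOp f es) = (\<forall>e\<in>set es. closedE d e)"

fun okC :: "nat \<Rightarrow> chref \<Rightarrow> bool" where
  "okC k (CF a) = True"
| "okC k (CB i) = (i < k)"

fun okB :: "nat \<Rightarrow> nat \<Rightarrow> ('v, 'f) bexp \<Rightarrow> bool" where
  "okB d k (BEq e1 e2) = (closedE d e1 \<and> closedE d e2)"
| "okB d k (BExp c) = okC k c"

text \<open>okP d p k P: data variables below d, process variables below p, bound channels below k.\<close>
primrec okP :: "nat \<Rightarrow> nat \<Rightarrow> nat \<Rightarrow> ('v, 'f) proc \<Rightarrow> bool" where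
  "okP d p k (PSnd c e P) = (okC k c \<and> closedE d e \<and> okP d p k P)"
| "okP d p k (PRcv c P Q) = (okC k c \<and> okP (Suc d) p k P \<and> okP d p k Q)"
| "okP d p k (PSleep P) = okP d p k P"
| "okP d p k (PTau P) = okP d p k P"
| "okP d p k (PSum P Q) = (okP d p k P \<and> okP d p k Q)"
| "okP d p k (PCond b P Q) = (okB d k b \<and> okP d p k P \<and> okP d p k Q)"
| "okP d p k (PVar n) = (n < p)"
| "okP d p k PNil = True"
| "okP d p k (PFix P) = okP d (Suc p) k P"

primrec okS :: "nat \<Rightarrow> ('v, 'f) sys \<Rightarrow> bool" where
  "okS k (SProc P) = okP 0 0 k P"
| "okS k (SAct c P) = (okC k c \<and> okP 1 0 k P)"
| "okS k (SPar W1 W2) = (okS k W1 \<and> okS k W2)"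
| "okS k (SNu n v W) = okS (Suc k) W"

definition closedS :: "('v, 'f) sys \<Rightarrow> bool" where
  "closedS W = okS 0 W"

fun fcC :: "chref \<Rightarrow> chan set" where
  "fcC (CF a) = {a}"
| "fcC (CB i) = {}"

fun fcB :: "('v, 'f) bexp \<Rightarrow> chan set" where
  "fcB (BEq e1 e2) = {}"
| "fcB (BExp c) = fcC c"

primrec fcP :: "('v, 'f) proc \<Rightarrow> chan set" where
  "fcP (PSnd c e P) = fcC c \<union> fcP P"
| "fcP (PRcv c P Q) = fcC c \<union> fcP P \<union> fcP Q"
| "fcP (PSleep P) = fcP P"
| "fcP (PTau P) = fcP P"
| "fcP (PSum P Q) = fcP P \<union> fcP Q"
| "fcP (PCond b P Q) = fcB b \<union> fcP P \<union> fcP Q"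
| "fcP (PVar n) = {}"
| "fcP PNil = {}"
| "fcP (PFix P) = fcP P"

primrec fcS :: "('v, 'f) sys \<Rightarrow> chan set" where
  "fcS (SProc P) = fcP P"
| "fcS (SAct c P) = fcC c \<union> fcP P"
| "fcS (SPar W1 W2) = fcS W1 \<union> fcS W2"
| "fcS (SNu n v W) = fcS W"

fun openC :: "nat \<Rightarrow> chan \<Rightarrow> chref \<Rightarrow> chref" where
  "openC k a (CB i) = (if i = k then CF a else CB i)"
| "openC k a (CF b) = CF b"

fun closeC :: "nat \<Rightarrow> chan \<Rightarrow> chref \<Rightarrow> chref" where
  "closeC k a (CF b) = (if b = a then CB k else CF b)"
| "closeC k a (CB i) = CB i"

fun mapB :: "(chref \<Rightarrow> chref) \<Rightarrow> ('v, 'f) bexp \<Rightarrow> ('v, 'f) bexp" where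
  "mapB g (BEq e1 e2) = BEq e1 e2"
| "mapB g (BExp c) = BExp (g c)"

primrec mapChP :: "(chref \<Rightarrow> chref) \<Rightarrow> ('v, 'f) proc \<Rightarrow> ('v, 'f) proc" where
  "mapChP g (PSnd c e P) = PSnd (g c) e (mapChP g P)"
| "mapChP g (PRcv c P Q) = PRcv (g c) (mapChP g P) (mapChP g Q)"
| "mapChP g (PSleep P) = PSleep (mapChP g P)"
| "mapChP g (PTau P) = PTau (mapChP g P)"
| "mapChP g (PSum P Q) = PSum (mapChP g P) (mapChP g Q)"
| "mapChP g (PCond b P Q) = PCond (mapB g b) (mapChP g P) (mapChP g Q)"
| "mapChP g (PVar n) = PVar n"
| "mapChP g PNil = PNil"
| "mapChP g (PFix P) = PFix (mapChP g P)"

text \<open>Processes bind no channels, so the channel de Bruijn level only changes at nu.\<close>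
primrec openS :: "nat \<Rightarrow> chan \<Rightarrow> ('v, 'f) sys \<Rightarrow> ('v, 'f) sys" where
  "openS k a (SProc P) = SProc (mapChP (openC k a) P)"
| "openS k a (SAct c P) = SAct (openC k a c) (mapChP (openC k a) P)"
| "openS k a (SPar W1 W2) = SPar (openS k a W1) (openS k a W2)"
| "openS k a (SNu n v W) = SNu n v (openS (Suc k) a W)"

primrec closeS :: "nat \<Rightarrow> chan \<Rightarrow> ('v, 'f) sys \<Rightarrow> ('v, 'f) sys" where
  "closeS k a (SProc P) = SProc (mapChP (closeC k a) P)"
| "closeS k a (SAct c P) = SAct (closeC k a c) (mapChP (closeC k a) P)"
| "closeS k a (SPar W1 W2) = SPar (closeS k a W1) (closeS k a W2)"
| "closeS k a (SNu n v W) = SNu n v (closeS (Suc k) a W)"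

section \<open>Substitution (de Bruijn, with shifting)\<close>

primrec liftE :: "nat \<Rightarrow> ('v, 'f) expr \<Rightarrow> ('v, 'f) expr" where
  "liftE k (EVal v) = EVal v"
| "liftE k (EVar n) = (if n < k then EVar n else EVar (Suc n))"
| "liftE k (EOp f es) = EOp f (map (liftE k) es)"

primrec substE :: "nat \<Rightarrow> 'v \<Rightarrow> ('v, 'f) expr \<Rightarrow> ('v, 'f) expr" where
  "substE k w (EVal v) = EVal v"
| "substE k w (EVar n) = (if n = k then EVal w else if k < n then EVar (n - 1) else EVar n)"
| "substE k w (EOp f es) = EOp f (map (substE k w) es)"

fun mapEB :: "(('v, 'f) expr \<Rightarrow> ('v, 'f) expr) \<Rightarrow> ('v, 'f) bexp \<Rightarrow> ('v, 'f) bexp" where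
  "mapEB g (BEq e1 e2) = BEq (g e1) (g e2)"
| "mapEB g (BExp c) = BExp c"

primrec liftPd :: "nat \<Rightarrow> ('v, 'f) proc \<Rightarrow> ('v, 'f) proc" where
  "liftPd k (PSnd c e P) = PSnd c (liftE k e) (liftPd k P)"
| "liftPd k (PRcv c P Q) = PRcv c (liftPd (Suc k) P) (liftPd k Q)"
| "liftPd k (PSleep P) = PSleep (liftPd k P)"
| "liftPd k (PTau P) = PTau (liftPd k P)"
| "liftPd k (PSum P Q) = PSum (liftPd k P) (liftPd k Q)"
| "liftPd k (PCond b P Q) = PCond (mapEB (liftE k) b) (liftPd k P) (liftPd k Q)"
| "liftPd k (PVar n) = PVar n"
| "liftPd k PNil = PNil"
| "liftPd k (PFix P) = PFix (liftPd k P)"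

primrec liftPp :: "nat \<Rightarrow> ('v, 'f) proc \<Rightarrow> ('v, 'f) proc" where
  "liftPp k (PSnd c e P) = PSnd c e (liftPp k P)"
| "liftPp k (PRcv c P Q) = PRcv c (liftPp k P) (liftPp k Q)"
| "liftPp k (PSleep P) = PSleep (liftPp k P)"
| "liftPp k (PTau P) = PTau (liftPp k P)"
| "liftPp k (PSum P Q) = PSum (liftPp k P) (liftPp k Q)"
| "liftPp k (PCond b P Q) = PCond b (liftPp k P) (liftPp k Q)"
| "liftPp k (PVar n) = (if n < k then PVar n else PVar (Suc n))"
| "liftPp k PNil = PNil"
| "liftPp k (PFix P) = PFix (liftPp (Suc k) P)"

primrec substPd :: "nat \<Rightarrow> 'v \<Rightarrow> ('v, 'f) proc \<Rightarrow> ('v, 'f) proc" where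
  "substPd k w (PSnd c e P) = PSnd c (substE k w e) (substPd k w P)"
| "substPd k w (PRcv c P Q) = PRcv c (substPd (Suc k) w P) (substPd k w Q)"
| "substPd k w (PSleep P) = PSleep (substPd k w P)"
| "substPd k w (PTau P) = PTau (substPd k w P)"
| "substPd k w (PSum P Q) = PSum (substPd k w P) (substPd k w Q)"
| "substPd k w (PCond b P Q) = PCond (mapEB (substE k w) b) (substPd k w P) (substPd k w Q)"
| "substPd k w (PVar n) = PVar n"
| "substPd k w PNil = PNil"
| "substPd k w (PFix P) = PFix (substPd k w P)"

primrec substPp :: "nat \<Rightarrow> ('v, 'f) proc \<Rightarrow> ('v, 'f) proc \<Rightarrow> ('v, 'f) proc" where
  "substPp k T (PSnd c e P) = PSnd c e (substPp k T P)"
| "substPp k T (PRcv c P Q) = PRcv c (substPp k (liftPd 0 T) P) (substPp k T Q)"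
| "substPp k T (PSleep P) = PSleep (substPp k T P)"
| "substPp k T (PTau P) = PTau (substPp k T P)"
| "substPp k T (PSum P Q) = PSum (substPp k T P) (substPp k T Q)"
| "substPp k T (PCond b P Q) = PCond b (substPp k T P) (substPp k T Q)"
| "substPp k T (PVar n) = (if n = k then T else if k < n then PVar (n - 1) else PVar n)"
| "substPp k T PNil = PNil"
| "substPp k T (PFix P) = PFix (substPp (Suc k) (liftPp 0 T) P)"

fun evalE :: "('f \<Rightarrow> 'v list \<Rightarrow> 'v) \<Rightarrow> ('v, 'f) expr \<Rightarrow> 'v option" where
  "evalE I (EVal v) = Some v"
| "evalE I (EVar n) = None"
| "evalE I (EOp f es) =
     (if (\<forall>e\<in>set es. evalE I e \<noteq> None) then Some (I f (map (\<lambda>e. the (evalE I e)) es)) else None)"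

type_synonym 'v env = "chan \<Rightarrow> nat \<times> 'v"

definition idle :: "'v env \<Rightarrow> chan \<Rightarrow> bool" where
  "idle \<Gamma> c = (fst (\<Gamma> c) = 0)"

definition exposed :: "'v env \<Rightarrow> chan \<Rightarrow> bool" where
  "exposed \<Gamma> c = (fst (\<Gamma> c) > 0)"

fun evalB :: "('f \<Rightarrow> 'v list \<Rightarrow> 'v) \<Rightarrow> 'v env \<Rightarrow> ('v, 'f) bexp \<Rightarrow> bool" where
  "evalB I \<Gamma> (BEq e1 e2) = (evalE I e1 = evalE I e2)"
| "evalB I \<Gamma> (BExp (CF c)) = exposed \<Gamma> c"
| "evalB I \<Gamma> (BExp (CB i)) = False"

datatype 'v act = AOut chan 'v | AIn chan 'v | ASig | ATau

fun chans_act :: "'v act \<Rightarrow> chan set" where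
  "chans_act (AOut c v) = {c}"
| "chans_act (AIn c v) = {c}"
| "chans_act ASig = {}"
| "chans_act ATau = {}"

definition bcast_upd :: "('v, 'f) cccp_sig \<Rightarrow> chan \<Rightarrow> 'v \<Rightarrow> 'v env \<Rightarrow> 'v env" where
  "bcast_upd S c v \<Gamma> =
     \<Gamma>(c := (if fst (\<Gamma> c) = 0 then (delta S v, v)
             else (max (delta S v) (fst (\<Gamma> c)), errv S)))"

fun upd :: "('v, 'f) cccp_sig \<Rightarrow> 'v act \<Rightarrow> 'v env \<Rightarrow> 'v env" where
  "upd S (AOut c v) \<Gamma> = bcast_upd S c v \<Gamma>"
| "upd S (AIn c v) \<Gamma> = bcast_upd S c v \<Gamma>"
| "upd S ASig \<Gamma> = (\<lambda>c. (fst (\<Gamma> c) - 1, snd (\<Gamma> c)))"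
| "upd S ATau \<Gamma> = \<Gamma>"

primrec rcvP :: "('v, 'f) proc \<Rightarrow> chan \<Rightarrow> bool" where
  "rcvP (PSnd d e P) c = False"
| "rcvP (PRcv d P Q) c = (d = CF c)"
| "rcvP (PSleep P) c = False"
| "rcvP (PTau P) c = False"
| "rcvP (PSum P Q) c = (rcvP P c \<or> rcvP Q c)"
| "rcvP (PCond b P Q) c = False"
| "rcvP (PVar n) c = False"
| "rcvP PNil c = False"
| "rcvP (PFix P) c = rcvP P c"

primrec rcvS :: "('v, 'f) sys \<Rightarrow> chan \<Rightarrow> bool" where
  "rcvS (SProc P) c = rcvP P c"
| "rcvS (SAct d P) c = False"
| "rcvS (SPar W1 W2) c = (rcvS W1 c \<or> rcvS W2 c)"
| "rcvS (SNu n v W) c = rcvS W c"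

definition rcv_conf :: "'v env \<Rightarrow> ('v, 'f) sys \<Rightarrow> chan \<Rightarrow> bool" where
  "rcv_conf \<Gamma> W c = (idle \<Gamma> c \<and> rcvS W c)"

section \<open>Intensional semantics\<close>

inductive trans :: "('v, 'f) cccp_sig \<Rightarrow> 'v env \<Rightarrow> ('v, 'f) sys \<Rightarrow> 'v act \<Rightarrow> ('v, 'f) sys \<Rightarrow> bool"
  for S :: "('v, 'f) cccp_sig" where
  Snd: "evalE (interp S) e = Some v \<Longrightarrow>
        trans S \<Gamma> (SProc (PSnd (CF c) e P)) (AOut c v) (SProc (sigmas (delta S v) P))"
| Rcv: "idle \<Gamma> c \<Longrightarrow> trans S \<Gamma> (SProc (PRcv (CF c) P Q)) (AIn c v) (SAct (CF c) P)"
| RcvIgn: "\<not> rcv_conf \<Gamma> W c \<Longrightarrow> trans S \<Gamma> W (AIn c v) W"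
| SyncL: "trans S \<Gamma> W1 (AOut c v) W1' \<Longrightarrow> trans S \<Gamma> W2 (AIn c v) W2' \<Longrightarrow>
          trans S \<Gamma> (SPar W1 W2) (AOut c v) (SPar W1' W2')"
| SyncR: "trans S \<Gamma> W1 (AIn c v) W1' \<Longrightarrow> trans S \<Gamma> W2 (AOut c v) W2' \<Longrightarrow>
          trans S \<Gamma> (SPar W1 W2) (AOut c v) (SPar W1' W2')"
| RcvPar: "trans S \<Gamma> W1 (AIn c v) W1' \<Longrightarrow> trans S \<Gamma> W2 (AIn c v) W2' \<Longrightarrow>
          trans S \<Gamma> (SPar W1 W2) (AIn c v) (SPar W1' W2')"
| TimeNil: "trans S \<Gamma> (SProc PNil) ASig (SProc PNil)"
| Sleep: "trans S \<Gamma> (SProc (PSleep P)) ASig (SProc P)"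
| ActRcv: "fst (\<Gamma> c) > 1 \<Longrightarrow> trans S \<Gamma> (SAct (CF c) P) ASig (SAct (CF c) P)"
| EndRcv: "\<Gamma> c = (1, w) \<Longrightarrow> trans S \<Gamma> (SAct (CF c) P) ASig (SProc (substPd 0 w P))"
| Timeout: "idle \<Gamma> c \<Longrightarrow> trans S \<Gamma> (SProc (PRcv (CF c) P Q)) ASig (SProc Q)"
| RcvLate: "exposed \<Gamma> c \<Longrightarrow>
     trans S \<Gamma> (SProc (PRcv (CF c) P Q)) ATau (SAct (CF c) (liftPd 0 (substPd 0 (errv S) P)))"
| Tau: "trans S \<Gamma> (SProc (PTau P)) ATau (SProc P)"
| Then: "evalB (interp S) \<Gamma> b \<Longrightarrow> trans S \<Gamma> (SProc (PCond b P Q)) ATau (SProc (PSleep P))"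
| Else: "\<not> evalB (interp S) \<Gamma> b \<Longrightarrow> trans S \<Gamma> (SProc (PCond b P Q)) ATau (SProc (PSleep Q))"
| TimePar: "trans S \<Gamma> W1 ASig W1' \<Longrightarrow> trans S \<Gamma> W2 ASig W2' \<Longrightarrow>
          trans S \<Gamma> (SPar W1 W2) ASig (SPar W1' W2')"
| TauParL: "trans S \<Gamma> W1 ATau W1' \<Longrightarrow> trans S \<Gamma> (SPar W1 W2) ATau (SPar W1' W2)"
| TauParR: "trans S \<Gamma> W2 ATau W2' \<Longrightarrow> trans S \<Gamma> (SPar W1 W2) ATau (SPar W1 W2')"
| Rec: "trans S \<Gamma> (SProc (substPp 0 (PFix P) P)) l W \<Longrightarrow> trans S \<Gamma> (SProc (PFix P)) l W"
| SumL: "l = ATau \<or> (\<exists>c v. l = AOut c v) \<Longrightarrow> trans S \<Gamma> (SProc P) l W \<Longrightarrow>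
          trans S \<Gamma> (SProc (PSum P Q)) l W"
| SumR: "l = ATau \<or> (\<exists>c v. l = AOut c v) \<Longrightarrow> trans S \<Gamma> (SProc Q) l W \<Longrightarrow>
          trans S \<Gamma> (SProc (PSum P Q)) l W"
| SumTime: "trans S \<Gamma> (SProc P) ASig (SProc P') \<Longrightarrow> trans S \<Gamma> (SProc Q) ASig (SProc Q') \<Longrightarrow>
          trans S \<Gamma> (SProc (PSum P Q)) ASig (SProc (PSum P' Q'))"
| SumRcvL: "trans S \<Gamma> (SProc P) (AIn c v) W \<Longrightarrow> rcv_conf \<Gamma> (SProc P) c \<Longrightarrow>
          trans S \<Gamma> (SProc (PSum P Q)) (AIn c v) W"
| SumRcvR: "trans S \<Gamma> (SProc Q) (AIn c v) W \<Longrightarrow> rcv_conf \<Gamma> (SProc Q) c \<Longrightarrow>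
          trans S \<Gamma> (SProc (PSum P Q)) (AIn c v) W"
| ResI: "a \<notin> fcS W \<Longrightarrow>
         trans S (\<Gamma>(a := (n, v))) (openS 0 a W) (AOut a w) W' \<Longrightarrow>
         upd S (AOut a w) (\<Gamma>(a := (n, v))) a = (n', v') \<Longrightarrow>
         trans S \<Gamma> (SNu n v W) ATau (SNu n' v' (closeS 0 a W'))"
| ResV: "a \<notin> fcS W \<Longrightarrow> a \<notin> chans_act l \<Longrightarrow>
         trans S (\<Gamma>(a := (n, v))) (openS 0 a W) l W' \<Longrightarrow>
         upd S l (\<Gamma>(a := (n, v))) a = (n', v') \<Longrightarrow>
         trans S \<Gamma> (SNu n v W) l (SNu n' v' (closeS 0 a W'))"

definition red_i :: "('v, 'f) cccp_sig \<Rightarrow> 'v env \<times> ('v, 'f) sys \<Rightarrow> 'v env \<times> ('v, 'f) sys \<Rightarrow> bool" where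
  "red_i S C C' = (\<exists>l. (l = ATau \<or> (\<exists>c v. l = AOut c v)) \<and>
       trans S (fst C) (snd C) l (snd C') \<and> fst C' = upd S l (fst C))"

definition red_sigma :: "('v, 'f) cccp_sig \<Rightarrow> 'v env \<times> ('v, 'f) sys \<Rightarrow> 'v env \<times> ('v, 'f) sys \<Rightarrow> bool" where
  "red_sigma S C C' = (trans S (fst C) (snd C) ASig (snd C') \<and> fst C' = upd S ASig (fst C))"

section \<open>Extensional semantics\<close>

datatype 'v eact = EIn chan 'v | ESig | ETau | EGamma chan 'v | EIota chan

inductive ext :: "('v, 'f) cccp_sig \<Rightarrow> 'v env \<times> ('v, 'f) sys \<Rightarrow> 'v eact \<Rightarrow> 'v env \<times> ('v, 'f) sys \<Rightarrow> bool"
  for S :: "('v, 'f) cccp_sig" where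
  Input: "trans S \<Gamma> W (AIn c v) W' \<Longrightarrow> ext S (\<Gamma>, W) (EIn c v) (upd S (AIn c v) \<Gamma>, W')"
| Time: "trans S \<Gamma> W ASig W' \<Longrightarrow> ext S (\<Gamma>, W) ESig (upd S ASig \<Gamma>, W')"
| Shh: "trans S \<Gamma> W (AOut c v) W' \<Longrightarrow> ext S (\<Gamma>, W) ETau (upd S (AOut c v) \<Gamma>, W')"
| TauExt: "trans S \<Gamma> W ATau W' \<Longrightarrow> ext S (\<Gamma>, W) ETau (\<Gamma>, W')"
| Deliver: "\<Gamma> c = (1, v) \<Longrightarrow> trans S \<Gamma> W ASig W' \<Longrightarrow> ext S (\<Gamma>, W) (EGamma c v) (upd S ASig \<Gamma>, W')"
| Idle: "idle \<Gamma> c \<Longrightarrow> ext S (\<Gamma>, W) (EIota c) (\<Gamma>, W)"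

definition weak_tau :: "('v, 'f) cccp_sig \<Rightarrow> 'v env \<times> ('v, 'f) sys \<Rightarrow> 'v env \<times> ('v, 'f) sys \<Rightarrow> bool" where
  "weak_tau S = (\<lambda>C C'. ext S C ETau C')\<^sup>*\<^sup>*"

definition weak_ext :: "('v, 'f) cccp_sig \<Rightarrow> 'v env \<times> ('v, 'f) sys \<Rightarrow> 'v eact \<Rightarrow> 'v env \<times> ('v, 'f) sys \<Rightarrow> bool" where
  "weak_ext S C \<alpha> C' = (\<exists>C1 C2. weak_tau S C C1 \<and> ext S C1 \<alpha> C2 \<and> weak_tau S C2 C')"

inductive wf :: "'v env \<Rightarrow> ('v, 'f) sys \<Rightarrow> bool" where
  wf_proc: "wf \<Gamma> (SProc P)"
| wf_act: "exposed \<Gamma> c \<Longrightarrow> wf \<Gamma> (SAct (CF c) P)"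
| wf_par: "wf \<Gamma> W1 \<Longrightarrow> wf \<Gamma> W2 \<Longrightarrow> wf \<Gamma> (SPar W1 W2)"
| wf_nu: "a \<notin> fcS W \<Longrightarrow> wf (\<Gamma>(a := (n, v))) (openS 0 a W) \<Longrightarrow> wf \<Gamma> (SNu n v W)"

definition wf_config :: "'v env \<Rightarrow> ('v, 'f) sys \<Rightarrow> bool" where
  "wf_config \<Gamma> W = (closedS W \<and> wf \<Gamma> W)"

definition T_in :: "chan \<Rightarrow> 'v \<Rightarrow> chan \<Rightarrow> chan \<Rightarrow> 'v \<Rightarrow> 'v \<Rightarrow> ('v, 'f) sys" where
  "T_in c v eureka fail arb no =
     SProc (PSum (PSnd (CF c) (EVal v) (PSnd (CF eureka) (EVal arb) PNil))
                 (PSnd (CF fail) (EVal no) PNil))"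

definition T_in_ok :: "('v, 'f) cccp_sig \<Rightarrow> 'v \<Rightarrow> chan \<Rightarrow> 'v \<Rightarrow> ('v, 'f) sys" where
  "T_in_ok S v eureka arb = SProc (sigmas (delta S v) (PSnd (CF eureka) (EVal arb) PNil))"

end

theory Submission imports Defs begin

(* Run the tester T = c!<v>.eureka!<arb>.0 + fail!<no>.0 in parallel with W.
   T never listens on any channel, so it ignores all broadcasts of W.  Its only instantaneous
   moves are the two broadcasts: c!v, which leaves the success residual T_ok = sigma^delta_v.(...),
   and fail!no, which leaves the dead residual sigma^delta_no.0.  Both residuals are inert:
   they have no instantaneous moves and ignore every input.
   (=>)  Each weak tau-step of W is an instantaneous reduction of W | X for any input-ignoring X
         (Shh becomes Sync with X ignoring, TauExt becomes TauPar); the c?v step of W pairs with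
         the c!v broadcast of T, since c!v and c?v update the environment identically.
   (<=)  Along any instantaneous reduction sequence from W | T the state has the form W1 | X where
         either X = T and W reached W1 by weak tau-steps, or X is inert and, if X = T_ok,
         W reached W1 by a weak c?v-step.  Reaching W' | T_ok therefore yields the weak c?v-step. *)

inductive_cases trans_sndE: "trans S G (SProc (PSnd c e P)) l X"
inductive_cases trans_sumE: "trans S G (SProc (PSum P Q)) l X"
inductive_cases trans_sleepE: "trans S G (SProc (PSleep P)) l X"
inductive_cases trans_nilE: "trans S G (SProc PNil) l X"
inductive_cases trans_parE: "trans S G (SPar A B) l X"

definition inert :: "('v, 'f) cccp_sig \<Rightarrow> ('v, 'f) sys \<Rightarrow> bool" where
  "inert S X \<longleftrightarrow> (\<forall>G l X'. trans S G X l X' \<longrightarrow> l = ASig \<or> (\<exists>d w. l = AIn d w \<and> X' = X))"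

lemma inert_sleep: "inert S (SProc (PSleep P))"
  unfolding inert_def by (auto elim!: trans_sleepE simp: rcv_conf_def)

lemma inert_nil: "inert S (SProc PNil)"
  unfolding inert_def by (auto elim!: trans_nilE simp: rcv_conf_def)

lemma inert_sigmas_nil: "inert S (SProc (sigmas n PNil))"
  by (cases n) (simp_all add: inert_nil inert_sleep)

lemma inert_no_tau: "inert S X \<Longrightarrow> \<not> trans S G X ATau X'"
  unfolding inert_def by blast

lemma inert_no_output: "inert S X \<Longrightarrow> \<not> trans S G X (AOut d w) X'"
  unfolding inert_def by blast

lemma inert_input: "inert S X \<Longrightarrow> trans S G X (AIn d w) X' \<Longrightarrow> X' = X"
  unfolding inert_def by blast

text \<open>Since every transmission takes at least one time unit, the success residual is a
  sigma-prefixed, hence inert, process; it differs from the tester and the dead residual.\<close>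
lemma T_in_ok_sleep:
  assumes "delta S v \<ge> 1"
  obtains P where "T_in_ok S v eu arb = SProc (PSleep P)"
  using assms unfolding T_in_ok_def by (cases "delta S v") auto

lemma sigmas_snd_neq_nil: "sigmas n (PSnd a e P) \<noteq> sigmas m PNil"
  by (induction n arbitrary: m) (case_tac m; simp)+

lemma T_in_ok_neq_dead: "T_in_ok S v eu arb \<noteq> SProc (sigmas n PNil)"
  by (simp add: T_in_ok_def sigmas_snd_neq_nil)

lemma T_in_not_rcv: "\<not> rcvS (T_in c v eu fa arb no) d"
  by (simp add: T_in_def)

lemma T_in_ok_not_rcv: "\<not> rcvS (T_in_ok S v eu arb) d"
  by (cases "delta S v") (simp_all add: T_in_ok_def)

lemma ignore_input: "\<not> rcvS X d \<Longrightarrow> trans S G X (AIn d w) X"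
  by (rule RcvIgn) (simp add: rcv_conf_def)

lemma T_in_input:
  assumes "trans S G (T_in c v eu fa arb no) (AIn d w) X"
  shows "X = T_in c v eu fa arb no"
  using assms unfolding T_in_def by (auto elim!: trans_sumE trans_sndE simp: rcv_conf_def)

lemma T_in_no_tau: "\<not> trans S G (T_in c v eu fa arb no) ATau X"
  unfolding T_in_def by (auto elim!: trans_sumE trans_sndE)

lemma T_in_output:
  assumes "trans S G (T_in c v eu fa arb no) (AOut d w) X"
  shows "(d = c \<and> w = v \<and> X = T_in_ok S v eu arb)
       \<or> (d = fa \<and> w = no \<and> X = SProc (sigmas (delta S no) PNil))"
  using assms unfolding T_in_def T_in_ok_def by (auto elim!: trans_sumE trans_sndE)

lemma T_in_fires: "trans S G (T_in c v eu fa arb no) (AOut c v) (T_in_ok S v eu arb)"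
  unfolding T_in_def T_in_ok_def by (rule SumL) (auto intro: Snd)

lemma red_i_par_cases:
  assumes "red_i S (G, SPar A B) C"
  obtains (tau_left) A' where "trans S G A ATau A'" "C = (G, SPar A' B)"
    | (tau_right) B' where "trans S G B ATau B'" "C = (G, SPar A B')"
    | (out_left) d w A' B' where "trans S G A (AOut d w) A'" "trans S G B (AIn d w) B'"
        "C = (upd S (AOut d w) G, SPar A' B')"
    | (out_right) d w A' B' where "trans S G A (AIn d w) A'" "trans S G B (AOut d w) B'"
        "C = (upd S (AOut d w) G, SPar A' B')"
  using assms unfolding red_i_def by (cases C) (auto elim!: trans_parE)

text \<open>A silent extensional step of W is an instantaneous reduction of W | X whenever
  X ignores inputs: Shh becomes a synchronisation, TauExt an interleaving.\<close>
lemma ext_tau_red_i: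
  assumes "ext S C ETau C'" and ign: "\<And>d. \<not> rcvS X d"
  shows "red_i S (fst C, SPar (snd C) X) (fst C', SPar (snd C') X)"
  using assms(1)
proof (cases rule: ext.cases)
  case (Shh \<Gamma> W d w W')
  then show ?thesis unfolding red_i_def
    by (auto intro!: exI[of _ "AOut d w"] SyncL ignore_input ign)
next
  case (TauExt \<Gamma> W W')
  then show ?thesis unfolding red_i_def by (auto intro!: exI[of _ ATau] TauParL)
qed

lemma weak_tau_red_i:
  assumes "weak_tau S C C'" and ign: "\<And>d. \<not> rcvS X d"
  shows "(red_i S)\<^sup>*\<^sup>* (fst C, SPar (snd C) X) (fst C', SPar (snd C') X)"
  using assms(1) unfolding weak_tau_def
proof (induction rule: rtranclp_induct)
  case (step C1 C2)
  then show ?case using ext_tau_red_i[OF step.hyps(2) ign] by simp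
qed simp

lemma weak_tau_step: "weak_tau S C C1 \<Longrightarrow> ext S C1 ETau C2 \<Longrightarrow> weak_tau S C C2"
  unfolding weak_tau_def by (rule rtranclp.rtrancl_into_rtrancl)

lemma weak_ext_step: "weak_ext S C a C1 \<Longrightarrow> ext S C1 ETau C2 \<Longrightarrow> weak_ext S C a C2"
  unfolding weak_ext_def using weak_tau_step by blast

lemma weak_input_passes_test:
  assumes "delta S v \<ge> 1" "weak_ext S (\<Gamma>, W) (EIn c v) (\<Gamma>', W')"
  shows "(red_i S)\<^sup>*\<^sup>* (\<Gamma>, SPar W (T_in c v eu fa arb no)) (\<Gamma>', SPar W' (T_in_ok S v eu arb))"
proof -
  from assms(2) obtain C1 C2 where before: "weak_tau S (\<Gamma>, W) C1"
    and input: "ext S C1 (EIn c v) C2" and after: "weak_tau S C2 (\<Gamma>', W')"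
    unfolding weak_ext_def by blast
  from input obtain W1' where C2: "C2 = (upd S (AIn c v) (fst C1), W1')"
    and recv: "trans S (fst C1) (snd C1) (AIn c v) W1'"
    by (cases rule: ext.cases) auto
  have "(red_i S)\<^sup>*\<^sup>* (\<Gamma>, SPar W (T_in c v eu fa arb no))
                       (fst C1, SPar (snd C1) (T_in c v eu fa arb no))"
    using weak_tau_red_i[OF before T_in_not_rcv] by simp
  moreover have "red_i S (fst C1, SPar (snd C1) (T_in c v eu fa arb no))
                         (fst C2, SPar (snd C2) (T_in_ok S v eu arb))"
    unfolding red_i_def using C2 recv by (auto intro!: exI[of _ "AOut c v"] SyncR T_in_fires)
  moreover have "(red_i S)\<^sup>*\<^sup>* (fst C2, SPar (snd C2) (T_in_ok S v eu arb))
                                (\<Gamma>', SPar W' (T_in_ok S v eu arb))"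
    using weak_tau_red_i[OF after T_in_ok_not_rcv] by simp
  ultimately show ?thesis by (meson rtranclp.rtrancl_into_rtrancl rtranclp_trans)
qed

definition test_progress :: "('v, 'f) cccp_sig \<Rightarrow> 'v eact \<Rightarrow> ('v, 'f) sys \<Rightarrow> ('v, 'f) sys \<Rightarrow>
    'v env \<times> ('v, 'f) sys \<Rightarrow> 'v env \<times> ('v, 'f) sys \<Rightarrow> ('v, 'f) sys \<Rightarrow> bool" where
  "test_progress S \<alpha> T T_ok C0 C X \<longleftrightarrow>
     (X = T \<and> weak_tau S C0 C) \<or> (inert S X \<and> (X = T_ok \<longrightarrow> weak_ext S C0 \<alpha> C))"

lemma test_progress_silent:
  "test_progress S \<alpha> T T_ok C0 C X \<Longrightarrow> ext S C ETau C' \<Longrightarrow> test_progress S \<alpha> T T_ok C0 C' X"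
  unfolding test_progress_def using weak_tau_step weak_ext_step by blast

lemma test_run_invariant:
  assumes "delta S v \<ge> 1"
    and "(red_i S)\<^sup>*\<^sup>* (\<Gamma>, SPar W (T_in c v eu fa arb no)) C"
  shows "\<exists>\<Gamma>1 W1 X. C = (\<Gamma>1, SPar W1 X) \<and>
     test_progress S (EIn c v) (T_in c v eu fa arb no) (T_in_ok S v eu arb) (\<Gamma>, W) (\<Gamma>1, W1) X"
  using assms(2)
proof (induction rule: rtranclp_induct)
  case base
  then show ?case unfolding test_progress_def weak_tau_def by auto
next
  case (step C1 C2)
  from step.IH obtain \<Gamma>1 W1 X where C1: "C1 = (\<Gamma>1, SPar W1 X)"
    and inv: "test_progress S (EIn c v) (T_in c v eu fa arb no) (T_in_ok S v eu arb) (\<Gamma>, W) (\<Gamma>1, W1) X"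
    by blast
  from step.hyps(2)[unfolded C1] show ?case
  proof (cases rule: red_i_par_cases)
    case (tau_left W1')
    with test_progress_silent[OF inv TauExt[OF tau_left(1)]] show ?thesis by blast
  next
    case (tau_right X')
    with inv T_in_no_tau inert_no_tau show ?thesis unfolding test_progress_def by metis
  next
    case (out_left d w W1' X')
    have "X' = X" using inv out_left(2) T_in_input inert_input unfolding test_progress_def by metis
    with out_left test_progress_silent[OF inv Shh[OF out_left(1)]] show ?thesis by blast
  next
    case (out_right d w W1' X')
    have tester: "X = T_in c v eu fa arb no" and silent: "weak_tau S (\<Gamma>, W) (\<Gamma>1, W1)"
      using inv out_right(2) inert_no_output unfolding test_progress_def by metis+
    from T_in_output[OF out_right(2)[unfolded tester]] show ?thesis
    proof (elim disjE conjE)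
      assume "d = c" "w = v" and success: "X' = T_in_ok S v eu arb"
      then have "ext S (\<Gamma>1, W1) (EIn c v) (upd S (AOut d w) \<Gamma>1, W1')"
        using Input[OF out_right(1)] by simp
      then have "weak_ext S (\<Gamma>, W) (EIn c v) (upd S (AOut d w) \<Gamma>1, W1')"
        using silent unfolding weak_ext_def weak_tau_def by blast
      moreover have "inert S X'"
        using success T_in_ok_sleep[OF assms(1)] inert_sleep by metis
      ultimately show ?thesis using out_right(3) unfolding test_progress_def by blast
    next
      assume dead: "X' = SProc (sigmas (delta S no) PNil)"
      then have "test_progress S (EIn c v) (T_in c v eu fa arb no) (T_in_ok S v eu arb)
                   (\<Gamma>, W) (upd S (AOut d w) \<Gamma>1, W1') X'"
        unfolding test_progress_def using inert_sigmas_nil T_in_ok_neq_dead by metis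
      with out_right(3) show ?thesis by blast
    qed
  qed
qed

theorem mainTheorem17:
  fixes S :: "('v, 'f) cccp_sig"
    and \<Gamma> \<Gamma>' :: "'v env" and W W' :: "('v, 'f) sys"
    and c eureka fail :: chan and v arb no :: 'v
  assumes delta_pos: "\<forall>u. delta S u \<ge> 1"
    and wfc: "wf_config \<Gamma> W"
    and fresh_e: "eureka \<notin> fcS W" and fresh_f: "fail \<notin> fcS W"
    and idle_e: "idle \<Gamma> eureka" and idle_f: "idle \<Gamma> fail"
    and d_arb: "delta S arb = 1" and d_no: "delta S no = 1"
  shows "weak_ext S (\<Gamma>, W) (EIn c v) (\<Gamma>', W') \<longleftrightarrow>
         (red_i S)\<^sup>*\<^sup>* (\<Gamma>, SPar W (T_in c v eureka fail arb no)) (\<Gamma>', SPar W' (T_in_ok S v eureka arb))"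
proof
  have dv: "delta S v \<ge> 1" using delta_pos by blast
  show "weak_ext S (\<Gamma>, W) (EIn c v) (\<Gamma>', W') \<Longrightarrow>
        (red_i S)\<^sup>*\<^sup>* (\<Gamma>, SPar W (T_in c v eureka fail arb no)) (\<Gamma>', SPar W' (T_in_ok S v eureka arb))"
    by (rule weak_input_passes_test[OF dv])
  assume "(red_i S)\<^sup>*\<^sup>* (\<Gamma>, SPar W (T_in c v eureka fail arb no)) (\<Gamma>', SPar W' (T_in_ok S v eureka arb))"
  then have "test_progress S (EIn c v) (T_in c v eureka fail arb no) (T_in_ok S v eureka arb)
               (\<Gamma>, W) (\<Gamma>', W') (T_in_ok S v eureka arb)"
    using test_run_invariant[OF dv] by fastforce
  moreover obtain P where "T_in_ok S v eureka arb = SProc (PSleep P)"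
    using T_in_ok_sleep[OF dv] .
  ultimately show "weak_ext S (\<Gamma>, W) (EIn c v) (\<Gamma>', W')"
    unfolding test_progress_def by (auto simp: T_in_def)
qed

end
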